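(* Let $G$ be a reaction network whose stoichiometric subspace is one-dimensional. If $cap_{pos}(G)<+\infty$, then $cap_{nondeg}(G)=cap_{pos}(G)$.
   Context: A reaction network $G$ has species $X_1,\dots,X_s$ and $m$ reactions $\sum_{i}\alpha_{ij}X_i\to\sum_i\beta_{ij}X_i$, with $\alpha_{ij},\beta_{ij}\in\mathbb Z_{\ge0}$ and $(\alpha_{1j},\dots,\alpha_{sj})\neq(\beta_{1j},\dots,\beta_{sj})$. The stoichiometric matrix $\mathcal N$ has entries $\beta_{ij}-\alpha_{ij}$; its image $S$ is the stoichiometric subspace. For $\kappa\in\mathbb R^m_{>0}$, mass-action kinetics gives $\dot x=f(\kappa;x)=\mathcal N(\kappa_1\prod_i x_i^{\alpha_{i1}},\dots,\kappa_m\prod_i x_i^{\alpha_{im}})^\top$. Stoichiometric compatibility classes are the sets $(x^0+S)\cap\mathbb R^s_{\ge0}$. A steady state is $x\in\mathbb R^s_{\ge0}$ with $f(\kappa;x)=0$; positive if $x\in\mathbb R^s_{>0}$; nondegenerate if $\mathrm{Jac}_f(x)(S)=S$. $cap_{pos}(G)$ (resp. $cap_{nondeg}(G)$) is the maximal $N\in\mathbb Z_{\ge0}\cup\{+\infty\}$ such that for some $\kappa$ and some compatibility class, $G$ has $N$ positive (resp. nondegenerate positive) steady states in that class. *)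

theory Defs
  imports "HOL-Analysis.Analysis" "HOL-Library.Extended_Nat"
begin

text \<open>Species are the elements of a finite type 's. A complex is a vector of
nonnegative integer stoichiometric coefficients ('s \<Rightarrow> nat). A reaction is a pair
(reactant complex alpha, product complex beta); a reaction network is the list of its
m reactions (reaction j is the j-th list element, j < m).\<close>

type_synonym 's complex = "'s \<Rightarrow> nat"
type_synonym 's network = "('s complex \<times> 's complex) list"

definition reaction_network :: "'s network \<Rightarrow> bool" where
  "reaction_network G \<longleftrightarrow> (\<forall>r \<in> set G. fst r \<noteq> snd r)"

definition cvec :: "'s::finite complex \<Rightarrow> real ^ 's" where
  "cvec a = (\<chi> i. real (a i))"

definition reaction_vec :: "'s::finite complex \<times> 's complex \<Rightarrow> real ^ 's" where
  "reaction_vec r = cvec (snd r) - cvec (fst r)"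

definition stoich_subspace :: "'s::finite network \<Rightarrow> (real ^ 's) set" where
  "stoich_subspace G = span (reaction_vec ` set G)"

definition monomial :: "'s::finite complex \<Rightarrow> real ^ 's \<Rightarrow> real" where
  "monomial a x = (\<Prod>i\<in>UNIV. (x $ i) ^ (a i))"

definition mass_action :: "'s::finite network \<Rightarrow> (nat \<Rightarrow> real) \<Rightarrow> real ^ 's \<Rightarrow> real ^ 's" where
  "mass_action G \<kappa> x = (\<Sum>j<length G. (\<kappa> j * monomial (fst (G ! j)) x) *\<^sub>R reaction_vec (G ! j))"

definition pos_rates :: "'s network \<Rightarrow> (nat \<Rightarrow> real) \<Rightarrow> bool" where
  "pos_rates G \<kappa> \<longleftrightarrow> (\<forall>j<length G. \<kappa> j > 0)"

definition compat_class :: "'s::finite network \<Rightarrow> real ^ 's \<Rightarrow> (real ^ 's) set" where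
  "compat_class G x0 = {x. x - x0 \<in> stoich_subspace G \<and> (\<forall>i. x $ i \<ge> 0)}"

definition pos_steady_states :: "'s::finite network \<Rightarrow> (nat \<Rightarrow> real) \<Rightarrow> real ^ 's \<Rightarrow> (real ^ 's) set" where
  "pos_steady_states G \<kappa> x0 =
     {x \<in> compat_class G x0. (\<forall>i. x $ i > 0) \<and> mass_action G \<kappa> x = 0}"

definition nondegenerate :: "'s::finite network \<Rightarrow> (nat \<Rightarrow> real) \<Rightarrow> real ^ 's \<Rightarrow> bool" where
  "nondegenerate G \<kappa> x \<longleftrightarrow>
     (\<exists>D. (mass_action G \<kappa> has_derivative D) (at x) \<and> D ` stoich_subspace G = stoich_subspace G)"

definition nondeg_pos_steady_states :: "'s::finite network \<Rightarrow> (nat \<Rightarrow> real) \<Rightarrow> real ^ 's \<Rightarrow> (real ^ 's) set" where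
  "nondeg_pos_steady_states G \<kappa> x0 = {x \<in> pos_steady_states G \<kappa> x0. nondegenerate G \<kappa> x}"

definition ecard :: "'a set \<Rightarrow> enat" where
  "ecard A = (if finite A then enat (card A) else \<infinity>)"

definition cap_pos :: "'s::finite network \<Rightarrow> enat" where
  "cap_pos G = (SUP p \<in> {(\<kappa>, x0). pos_rates G \<kappa>}. ecard (pos_steady_states G (fst p) (snd p)))"

definition cap_nondeg :: "'s::finite network \<Rightarrow> enat" where
  "cap_nondeg G = (SUP p \<in> {(\<kappa>, x0). pos_rates G \<kappa>}. ecard (nondeg_pos_steady_states G (fst p) (snd p)))"

end

theory Submission
  imports Defs "HOL-Computational_Algebra.Polynomial"
begin

(* Write S = span {v} and reaction_vec (G ! j) = c j v. At x0 + t v the mass-action field is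
   H(t) v for a polynomial H in t, so the positive steady states in the class of x0 are the roots
   of H in the open interval I of those t with x0 + t v > 0, and a simple root is a nondegenerate
   steady state.
   Take rates attaining the finite value cap_pos G and a reaction k with c k \<noteq> 0. Raising its
   rate by \<epsilon> / c k replaces H by H + \<epsilon> P with P > 0 on I. For all but finitely many \<epsilon> all roots
   of H + \<epsilon> P in I are simple: a double root t forces \<epsilon> = - H t / P t with t a root of the
   Wronskian H' P - H P' (or H / P constant on I). For small \<epsilon> of a well-chosen sign no root is
   lost: near a root of H where H changes sign one root survives, near one where it keeps its sign
   two roots or none appear depending on the sign of \<epsilon>, and one of the two signs gains at least
   as many roots as it loses. *)

lemma ecard_mono: "A \<subseteq> B \<Longrightarrow> ecard A \<le> ecard B"
  unfolding ecard_def by (auto dest: finite_subset intro: card_mono)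

lemma ecard_image: "inj_on f A \<Longrightarrow> ecard (f ` A) = ecard A"
  unfolding ecard_def by (auto simp: card_image finite_image_iff)

lemma eventually_not_in_finite_at_right:
  fixes A :: "real set"
  assumes "finite A"
  shows "\<forall>\<^sub>F x in at_right a. x \<notin> A"
  using islimpt_finite[OF assms, of a] by (simp add: islimpt_iff_eventually eventually_at_split)

lemma root_between_sign_change:
  fixes g :: "real \<Rightarrow> real"
  assumes "continuous_on {a..b} g" "a \<le> b" "g a * g b < 0"
  obtains x where "a < x" "x < b" "g x = 0"
proof -
  obtain x where "a \<le> x" "x \<le> b" "g x = 0"
    using IVT'[of g a 0 b] IVT2'[of g b 0 a] assms
    by (cases "g a < 0") (auto simp: mult_less_0_iff)
  moreover have "x \<noteq> a" "x \<noteq> b" using assms(3) \<open>g x = 0\<close> by auto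
  ultimately show ?thesis using that by force
qed

lemma sign_change_le_card_roots:
  fixes g :: "real \<Rightarrow> real"
  assumes "continuous_on {a..b} g" "a \<le> b" "finite {x\<in>{a<..<b}. g x = 0}"
  shows "of_bool (g a * g b < 0) \<le> card {x\<in>{a<..<b}. g x = 0}"
proof (cases "g a * g b < 0")
  case True
  then obtain x where "a < x" "x < b" "g x = 0"
    using root_between_sign_change assms(1,2) by blast
  then show ?thesis
    using assms(3) by (auto simp: Suc_le_eq card_gt_0_iff)
qed simp

lemma card_roots_ge_sign_changes:
  fixes g :: "real \<Rightarrow> real"
  assumes "continuous_on {a..b} g" "a < m" "m < b" "finite {x\<in>{a<..<b}. g x = 0}"
  shows "of_bool (g a * g m < 0) + of_bool (g m * g b < 0) \<le> card {x\<in>{a<..<b}. g x = 0}"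
proof -
  have fin: "finite {x\<in>{a<..<m}. g x = 0}" "finite {x\<in>{m<..<b}. g x = 0}"
    using assms(2,3) by (auto intro: finite_subset[OF _ assms(4)])
  have "of_bool (g a * g m < 0) + of_bool (g m * g b < 0)
      \<le> card {x\<in>{a<..<m}. g x = 0} + card {x\<in>{m<..<b}. g x = 0}"
    using assms(2,3) fin
    by (intro add_mono sign_change_le_card_roots continuous_on_subset[OF assms(1)]) auto
  also have "\<dots> = card ({x\<in>{a<..<m}. g x = 0} \<union> {x\<in>{m<..<b}. g x = 0})"
    using fin by (intro card_Un_disjoint[symmetric]) auto
  also have "\<dots> \<le> card {x\<in>{a<..<b}. g x = 0}"
    using assms by (intro card_mono) auto
  finally show ?thesis .
qed

lemma obtain_separating_radius:
  fixes T I :: "real set"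
  assumes "finite T" "T \<subseteq> I" "open I"
  obtains \<delta> where "\<delta> > 0" "\<And>t. t \<in> T \<Longrightarrow> {t - \<delta>..t + \<delta>} \<subseteq> I"
    "\<And>s t. s \<in> T \<Longrightarrow> t \<in> T \<Longrightarrow> s \<noteq> t \<Longrightarrow> 2 * \<delta> < \<bar>s - t\<bar>"
proof -
  have small: "\<forall>\<^sub>F \<delta> in at_right 0. \<delta> < c" if "c > 0" for c :: real
    using order_tendstoD(2)[OF tendsto_ident_at that] .
  have "\<forall>\<^sub>F \<delta> in at_right 0. 0 < \<delta> \<and>
      (\<forall>t\<in>T. {t - \<delta>..t + \<delta>} \<subseteq> I \<and> (\<forall>s\<in>T. s \<noteq> t \<longrightarrow> 2 * \<delta> < \<bar>s - t\<bar>))"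
  proof (intro eventually_conj eventually_at_right_less eventually_ball_finite[OF assms(1)] ballI)
    fix t assume "t \<in> T"
    then obtain e where "e > 0" "cball t e \<subseteq> I"
      using assms open_contains_cball by blast
    then show "\<forall>\<^sub>F \<delta> in at_right 0. {t - \<delta>..t + \<delta>} \<subseteq> I"
      using small[OF \<open>e > 0\<close>] by (auto simp: cball_eq_atLeastAtMost elim!: eventually_mono)
    fix s assume "s \<in> T"
    show "\<forall>\<^sub>F \<delta> in at_right 0. s \<noteq> t \<longrightarrow> 2 * \<delta> < \<bar>s - t\<bar>"
      using small[of "\<bar>s - t\<bar> / 2"] by (cases "s = t") (auto elim: eventually_mono)
  qed
  then show ?thesis
    using that eventually_happens'[OF trivial_limit_at_right_real] by blast
qed

lemma sum_card_roots_in_separated_intervals_le: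
  fixes g :: "real \<Rightarrow> real"
  assumes "finite T" "finite {x\<in>I. g x = 0}" "\<And>t. t \<in> T \<Longrightarrow> {t - \<delta><..<t + \<delta>} \<subseteq> I"
    "\<And>s t. s \<in> T \<Longrightarrow> t \<in> T \<Longrightarrow> s \<noteq> t \<Longrightarrow> 2 * \<delta> \<le> \<bar>s - t\<bar>"
  shows "(\<Sum>t\<in>T. card {x\<in>{t - \<delta><..<t + \<delta>}. g x = 0}) \<le> card {x\<in>I. g x = 0}"
proof -
  have "(\<Sum>t\<in>T. card {x\<in>{t - \<delta><..<t + \<delta>}. g x = 0}) = card (\<Union>t\<in>T. {x\<in>{t - \<delta><..<t + \<delta>}. g x = 0})"
  proof (intro card_UN_disjoint[symmetric] assms(1) ballI impI)
    fix t assume "t \<in> T"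
    then show "finite {x\<in>{t - \<delta><..<t + \<delta>}. g x = 0}"
      using assms(3)[OF \<open>t \<in> T\<close>] by (intro finite_subset[OF _ assms(2)]) force
    fix s assume "s \<in> T" "t \<noteq> s"
    then show "{x\<in>{t - \<delta><..<t + \<delta>}. g x = 0} \<inter> {x\<in>{s - \<delta><..<s + \<delta>}. g x = 0} = {}"
      using assms(4)[of s t] \<open>t \<in> T\<close> by auto
  qed
  also have "\<dots> \<le> card {x\<in>I. g x = 0}"
    using assms(3) by (intro card_mono assms(2)) force
  finally show ?thesis .
qed

lemma sign_change_of_perturbation_iff:
  fixes \<sigma> y w u :: real
  assumes "\<bar>\<sigma>\<bar> = 1" "0 < u" "0 < w" "w < \<bar>y\<bar>"
  shows "(y + \<sigma> * w) * (\<sigma> * u) < 0 \<longleftrightarrow> \<sigma> * y < 0"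
proof -
  have "\<sigma> = 1 \<or> \<sigma> = -1"
    using assms(1) by (auto simp: abs_if split: if_splits)
  then show ?thesis
    using assms(2-4) by (auto simp: abs_if mult_less_0_iff)
qed

lemma card_roots_of_perturbation_near_root_ge:
  fixes h p :: "real \<Rightarrow> real"
  assumes cont: "continuous_on {t - \<delta>..t + \<delta>} h" "continuous_on {t - \<delta>..t + \<delta>} p"
    and "\<delta> > 0" "h t = 0" "\<And>x. x \<in> {t - \<delta>..t + \<delta>} \<Longrightarrow> p x > 0"
    and "\<bar>\<sigma>\<bar> = 1" "e > 0" "e * p (t - \<delta>) < \<bar>h (t - \<delta>)\<bar>" "e * p (t + \<delta>) < \<bar>h (t + \<delta>)\<bar>"
    and fin: "finite {x\<in>{t - \<delta><..<t + \<delta>}. h x + \<sigma> * e * p x = 0}"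
  shows "of_bool (\<sigma> * h (t - \<delta>) < 0) + of_bool (\<sigma> * h (t + \<delta>) < 0)
    \<le> card {x\<in>{t - \<delta><..<t + \<delta>}. h x + \<sigma> * e * p x = 0}"
proof -
  define g where "g x = h x + \<sigma> * (e * p x)" for x
  have roots: "{x\<in>{t - \<delta><..<t + \<delta>}. h x + \<sigma> * e * p x = 0} = {x\<in>{t - \<delta><..<t + \<delta>}. g x = 0}"
    by (simp add: g_def mult.assoc)
  have "0 < e * p t"
    using assms(3,5,7) by auto
  then have sign_change: "g a * g t < 0 \<longleftrightarrow> \<sigma> * h a < 0"
    if "a \<in> {t - \<delta>..t + \<delta>}" "e * p a < \<bar>h a\<bar>" for a
    using sign_change_of_perturbation_iff[OF assms(6)] assms(4,5,7) that
    by (simp add: g_def)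
  have "continuous_on {t - \<delta>..t + \<delta>} g"
    unfolding g_def by (intro continuous_intros cont)
  then show ?thesis
    using card_roots_ge_sign_changes[of "t - \<delta>" "t + \<delta>" g t] fin assms(3,8,9)
      sign_change[of "t - \<delta>"] sign_change[of "t + \<delta>"]
    unfolding roots by (simp add: mult.commute[of "g t"])
qed

lemma sign_changes_le_card_roots_of_perturbation:
  fixes h p :: "real \<Rightarrow> real"
  assumes cont: "continuous_on I h" "continuous_on I p" and p_pos: "\<And>t. t \<in> I \<Longrightarrow> p t > 0"
    and T: "finite T" "\<And>t. t \<in> T \<Longrightarrow> h t = 0"
    and \<delta>: "\<delta> > 0" "\<And>t. t \<in> T \<Longrightarrow> {t - \<delta>..t + \<delta>} \<subseteq> I"
      "\<And>s t. s \<in> T \<Longrightarrow> t \<in> T \<Longrightarrow> s \<noteq> t \<Longrightarrow> 2 * \<delta> < \<bar>s - t\<bar>"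
    and e: "\<bar>\<sigma>\<bar> = 1" "e > 0"
      "\<And>t. t \<in> T \<Longrightarrow> e * p (t - \<delta>) < \<bar>h (t - \<delta>)\<bar> \<and> e * p (t + \<delta>) < \<bar>h (t + \<delta>)\<bar>"
  shows "enat (\<Sum>t\<in>T. of_bool (\<sigma> * h (t - \<delta>) < 0) + of_bool (\<sigma> * h (t + \<delta>) < 0))
    \<le> ecard {t\<in>I. h t + \<sigma> * e * p t = 0}"
proof (cases "finite {t\<in>I. h t + \<sigma> * e * p t = 0}")
  case True
  have "(\<Sum>t\<in>T. of_bool (\<sigma> * h (t - \<delta>) < 0) + of_bool (\<sigma> * h (t + \<delta>) < 0))
      \<le> (\<Sum>t\<in>T. card {x\<in>{t - \<delta><..<t + \<delta>}. h x + \<sigma> * e * p x = 0})"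
  proof (intro sum_mono card_roots_of_perturbation_near_root_ge e(1,2) \<delta>(1))
    fix t assume t: "t \<in> T"
    show "continuous_on {t - \<delta>..t + \<delta>} h" "continuous_on {t - \<delta>..t + \<delta>} p"
      using cont \<delta>(2)[OF t] by (auto intro: continuous_on_subset)
    show "h t = 0" "e * p (t - \<delta>) < \<bar>h (t - \<delta>)\<bar>" "e * p (t + \<delta>) < \<bar>h (t + \<delta>)\<bar>"
      using T(2) e(3) t by auto
    show "p x > 0" if "x \<in> {t - \<delta>..t + \<delta>}" for x
      using p_pos \<delta>(2)[OF t] that by auto
    show "finite {x\<in>{t - \<delta><..<t + \<delta>}. h x + \<sigma> * e * p x = 0}"
      using True \<delta>(2)[OF t] by (elim finite_subset[rotated]) force
  qed
  also have "\<dots> \<le> card {t\<in>I. h t + \<sigma> * e * p t = 0}"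
    using True T(1) \<delta>(2,3) by (intro sum_card_roots_in_separated_intervals_le) force+
  finally show ?thesis
    using True by (simp add: ecard_def)
qed (simp add: ecard_def)

lemma eventually_card_roots_of_perturbation_ge:
  fixes h p :: "real \<Rightarrow> real"
  assumes I: "open I" and cont: "continuous_on I h" "continuous_on I p"
    and p_pos: "\<And>t. t \<in> I \<Longrightarrow> p t > 0" and fin: "finite {t\<in>I. h t = 0}"
  obtains \<sigma> :: real where "\<bar>\<sigma>\<bar> = 1"
    "\<forall>\<^sub>F e in at_right 0. enat (card {t\<in>I. h t = 0}) \<le> ecard {t\<in>I. h t + \<sigma> * e * p t = 0}"
proof -
  define T where "T = {t\<in>I. h t = 0}"
  obtain \<delta> where \<delta>: "\<delta> > 0" "\<And>t. t \<in> T \<Longrightarrow> {t - \<delta>..t + \<delta>} \<subseteq> I"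
      "\<And>s t. s \<in> T \<Longrightarrow> t \<in> T \<Longrightarrow> s \<noteq> t \<Longrightarrow> 2 * \<delta> < \<bar>s - t\<bar>"
    using obtain_separating_radius[OF fin _ I] unfolding T_def by blast
  have ends_nonzero: "h (t - \<delta>) \<noteq> 0" "h (t + \<delta>) \<noteq> 0" if "t \<in> T" for t
  proof -
    have "t - \<delta> \<in> I" "t + \<delta> \<in> I"
      using \<delta>(1) \<delta>(2)[OF that] by auto
    moreover have "t - \<delta> \<notin> T" "t + \<delta> \<notin> T"
      using \<delta>(1) \<delta>(3)[OF _ that] by force+
    ultimately show "h (t - \<delta>) \<noteq> 0" "h (t + \<delta>) \<noteq> 0"
      unfolding T_def by auto
  qed
  define L :: "real \<Rightarrow> nat" where
    "L \<sigma> = (\<Sum>t\<in>T. of_bool (\<sigma> * h (t - \<delta>) < 0) + of_bool (\<sigma> * h (t + \<delta>) < 0))" for \<sigma>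
  (* h (t - \<delta>) and h (t + \<delta>) are nonzero, so each is counted by exactly one of L 1, L (-1) *)
  have "L 1 + L (-1) = (\<Sum>t\<in>T. 2)"
    unfolding L_def sum.distrib[symmetric] by (intro sum.cong refl) (auto dest: ends_nonzero)
  then have "\<exists>\<sigma>::real. \<bar>\<sigma>\<bar> = 1 \<and> card T \<le> L \<sigma>"
    by (cases "card T \<le> L 1") (auto intro: exI[of _ 1] exI[of _ "-1"])
  then obtain \<sigma> :: real where \<sigma>: "\<bar>\<sigma>\<bar> = 1" "card T \<le> L \<sigma>"
    by blast
  have "\<forall>\<^sub>F e in at_right 0. 0 < e \<and>
      (\<forall>t\<in>T. e * p (t - \<delta>) < \<bar>h (t - \<delta>)\<bar> \<and> e * p (t + \<delta>) < \<bar>h (t + \<delta>)\<bar>)"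
  proof (intro eventually_conj eventually_at_right_less eventually_ball_finite ballI)
    show "finite T" using fin by (simp add: T_def)
    have to_0: "((\<lambda>e. e * p a) \<longlongrightarrow> 0) (at_right 0)" for a
      by (auto intro!: tendsto_eq_intros)
    fix t assume "t \<in> T"
    then show "\<forall>\<^sub>F e in at_right 0. e * p (t - \<delta>) < \<bar>h (t - \<delta>)\<bar>"
      "\<forall>\<^sub>F e in at_right 0. e * p (t + \<delta>) < \<bar>h (t + \<delta>)\<bar>"
      using order_tendstoD(2)[OF to_0] ends_nonzero by auto
  qed
  then have "\<forall>\<^sub>F e in at_right 0. enat (L \<sigma>) \<le> ecard {t\<in>I. h t + \<sigma> * e * p t = 0}"
    unfolding L_def using fin \<delta> \<sigma>(1)
    by (elim eventually_mono conjE, intro sign_changes_le_card_roots_of_perturbation[OF cont p_pos])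
      (auto simp: T_def)
  then have "\<forall>\<^sub>F e in at_right 0. enat (card T) \<le> ecard {t\<in>I. h t + \<sigma> * e * p t = 0}"
    using \<sigma>(2) by (elim eventually_mono) (erule order_trans[rotated], simp)
  then show ?thesis
    unfolding T_def by (rule that[OF \<sigma>(1)])
qed

lemma finite_perturbations_with_multiple_root:
  fixes H P :: "real poly"
  assumes "convex I" and P_nonzero: "\<And>t. t \<in> I \<Longrightarrow> poly P t \<noteq> 0"
  shows "finite {\<epsilon>. \<exists>t\<in>I. poly (H + smult \<epsilon> P) t = 0 \<and> poly (pderiv (H + smult \<epsilon> P)) t = 0}"
proof -
  define W where "W = pderiv H * P - H * pderiv P"
  define q where "q t = - poly H t / poly P t" for t
  have "{\<epsilon>. \<exists>t\<in>I. poly (H + smult \<epsilon> P) t = 0 \<and> poly (pderiv (H + smult \<epsilon> P)) t = 0}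
      \<subseteq> q ` {t\<in>I. poly W t = 0}"
  proof clarify
    fix \<epsilon> t assume t: "t \<in> I" and
      "poly (H + smult \<epsilon> P) t = 0" "poly (pderiv (H + smult \<epsilon> P)) t = 0"
    then have "poly H t = - \<epsilon> * poly P t" "poly (pderiv H) t = - \<epsilon> * poly (pderiv P) t"
      by (simp_all add: pderiv_add pderiv_smult)
    then have "poly W t = 0" "\<epsilon> = q t"
      using P_nonzero[OF t] by (simp_all add: W_def q_def)
    then show "\<epsilon> \<in> q ` {t\<in>I. poly W t = 0}"
      using t by blast
  qed
  moreover have "finite (q ` {t\<in>I. poly W t = 0})"
  proof (cases "W = 0")
    case True
    have "(q has_real_derivative - poly W t / (poly P t * poly P t)) (at t within I)"
      if "t \<in> I" for t
      unfolding q_def W_def using P_nonzero[OF that]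
      by (auto intro!: derivative_eq_intros simp: field_simps)
    then obtain c where "\<And>t. t \<in> I \<Longrightarrow> q t = c"
      using has_field_derivative_zero_constant[OF \<open>convex I\<close>, of q] True by auto
    then have "q ` {t\<in>I. poly W t = 0} \<subseteq> {c}"
      by auto
    then show ?thesis
      using finite_subset by blast
  qed (simp add: poly_roots_finite)
  ultimately show ?thesis
    by (rule finite_subset)
qed

lemma small_perturbation_with_simple_roots:
  fixes H P :: "real poly"
  assumes "open I" "convex I" "\<And>t. t \<in> I \<Longrightarrow> poly P t > 0"
    and "finite {t\<in>I. poly H t = 0}" "\<eta> > 0"
  obtains \<epsilon> where "\<bar>\<epsilon>\<bar> < \<eta>"
    "\<And>t. t \<in> I \<Longrightarrow> poly (H + smult \<epsilon> P) t = 0 \<Longrightarrow> poly (pderiv (H + smult \<epsilon> P)) t \<noteq> 0"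
    "enat (card {t\<in>I. poly H t = 0}) \<le> ecard {t\<in>I. poly (H + smult \<epsilon> P) t = 0}"
proof -
  define D where
    "D = {\<epsilon>. \<exists>t\<in>I. poly (H + smult \<epsilon> P) t = 0 \<and> poly (pderiv (H + smult \<epsilon> P)) t = 0}"
  have "finite D"
    unfolding D_def using assms(2,3) by (intro finite_perturbations_with_multiple_root) force+
  have cont: "continuous_on I (poly H)" "continuous_on I (poly P)"
    by (auto intro: continuous_intros)
  obtain \<sigma> :: real where \<sigma>: "\<bar>\<sigma>\<bar> = 1" and
    more_roots: "\<forall>\<^sub>F e in at_right 0.
      enat (card {t\<in>I. poly H t = 0}) \<le> ecard {t\<in>I. poly H t + \<sigma> * e * poly P t = 0}"
    using eventually_card_roots_of_perturbation_ge[OF assms(1) cont assms(3,4)] by blast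
  have "\<forall>\<^sub>F e in at_right 0. 0 < e \<and> e < \<eta> \<and> e \<notin> (\<lambda>d. \<sigma> * d) ` D \<and>
      enat (card {t\<in>I. poly H t = 0}) \<le> ecard {t\<in>I. poly H t + \<sigma> * e * poly P t = 0}"
    using \<open>finite D\<close> assms(5)
    by (intro eventually_conj eventually_at_right_less eventually_not_in_finite_at_right
        more_roots order_tendstoD(2)[OF tendsto_ident_at]) auto
  then obtain e where e: "0 < e" "e < \<eta>" "e \<notin> (\<lambda>d. \<sigma> * d) ` D"
    "enat (card {t\<in>I. poly H t = 0}) \<le> ecard {t\<in>I. poly H t + \<sigma> * e * poly P t = 0}"
    using eventually_happens'[OF trivial_limit_at_right_real] by blast
  have "\<sigma> * e \<notin> D"
    using e(3) \<sigma> by (auto simp: image_iff abs_if split: if_splits)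
  then show ?thesis
    using that[of "\<sigma> * e"] e \<sigma> unfolding D_def by (auto simp: abs_mult)
qed

definition line_monomial :: "real^'s::finite \<Rightarrow> real^'s \<Rightarrow> 's complex \<Rightarrow> real poly" where
  "line_monomial x0 v a = (\<Prod>i\<in>UNIV. [:x0 $ i, v $ i:] ^ a i)"

lemma poly_line_monomial: "poly (line_monomial x0 v a) t = monomial a (x0 + t *\<^sub>R v)"
  unfolding line_monomial_def monomial_def by (simp add: poly_prod algebra_simps)

definition positive_line_params :: "real^'s::finite \<Rightarrow> real^'s \<Rightarrow> real set" where
  "positive_line_params x0 v = {t. \<forall>i. 0 < (x0 + t *\<^sub>R v) $ i}"

lemma positive_line_params_eq_halfspaces:
  "positive_line_params x0 v = (\<Inter>i. {t. inner (v $ i) t > - (x0 $ i)})"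
proof -
  have "0 < x0 $ i + t * v $ i \<longleftrightarrow> inner (v $ i) t > - (x0 $ i)" for i t
    by (auto simp: algebra_simps)
  then show ?thesis
    by (auto simp: positive_line_params_def)
qed

lemma open_positive_line_params: "open (positive_line_params x0 v)"
  unfolding positive_line_params_eq_halfspaces
  by (rule open_INT) (auto simp del: inner_real_def intro: open_halfspace_gt)

lemma convex_positive_line_params: "convex (positive_line_params x0 v)"
  unfolding positive_line_params_eq_halfspaces by (intro convex_INT convex_halfspace_gt)

lemma line_monomial_pos:
  "t \<in> positive_line_params x0 v \<Longrightarrow> poly (line_monomial x0 v a) t > 0"
  unfolding poly_line_monomial monomial_def positive_line_params_def by (auto intro!: prod_pos)

lemma mass_action_differentiable: "mass_action G \<kappa> differentiable (at x)"
proof -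
  have "monomial a differentiable (at x)" for a :: "'a complex"
    unfolding monomial_def differentiable_def
    by (rule exI, rule has_derivative_prod, rule has_derivative_power,
        rule bounded_linear_imp_has_derivative, rule bounded_linear_vec_nth)
  then show ?thesis
    unfolding mass_action_def
    by (intro differentiable_sum differentiable_scaleR differentiable_mult differentiable_const) auto
qed

locale one_dim_network =
  fixes G :: "'s::finite network" and v :: "real^'s" and c :: "nat \<Rightarrow> real"
  assumes v_nonzero: "v \<noteq> 0"
    and stoich_subspace_eq: "stoich_subspace G = span {v}"
    and reaction_vec_eq: "\<And>j. j < length G \<Longrightarrow> reaction_vec (G ! j) = c j *\<^sub>R v"
begin

definition steady_state_poly :: "(nat \<Rightarrow> real) \<Rightarrow> real^'s \<Rightarrow> real poly" where
  "steady_state_poly \<kappa> x0 = (\<Sum>j<length G. smult (\<kappa> j * c j) (line_monomial x0 v (fst (G ! j))))"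

lemma mass_action_on_line:
  "mass_action G \<kappa> (x0 + t *\<^sub>R v) = poly (steady_state_poly \<kappa> x0) t *\<^sub>R v"
  unfolding mass_action_def steady_state_poly_def
  by (simp add: reaction_vec_eq poly_sum poly_line_monomial scaleR_sum_left mult_ac)

lemma inj_on_line: "inj_on (\<lambda>t. x0 + t *\<^sub>R v) A"
  using v_nonzero by (auto simp: inj_on_def)

lemma pos_steady_states_eq:
  "pos_steady_states G \<kappa> x0 = (\<lambda>t. x0 + t *\<^sub>R v) `
     {t\<in>positive_line_params x0 v. poly (steady_state_poly \<kappa> x0) t = 0}"
proof -
  have "x - x0 \<in> stoich_subspace G \<longleftrightarrow> (\<exists>t. x = x0 + t *\<^sub>R v)" for x
    unfolding stoich_subspace_eq span_singleton by (auto simp: algebra_simps)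
  then show ?thesis
    unfolding pos_steady_states_def compat_class_def positive_line_params_def
    using v_nonzero by (auto simp: mass_action_on_line less_imp_le)
qed

lemma nondegenerate_if_simple_root:
  assumes "poly (pderiv (steady_state_poly \<kappa> x0)) t \<noteq> 0"
  shows "nondegenerate G \<kappa> (x0 + t *\<^sub>R v)"
proof -
  define d where "d = poly (pderiv (steady_state_poly \<kappa> x0)) t"
  obtain D where D: "(mass_action G \<kappa> has_derivative D) (at (x0 + t *\<^sub>R v))"
    using mass_action_differentiable unfolding differentiable_def by blast
  have "((\<lambda>s. x0 + s *\<^sub>R v) has_derivative (\<lambda>s. s *\<^sub>R v)) (at t)"
    by (auto intro!: derivative_eq_intros)
  then have "((\<lambda>s. mass_action G \<kappa> (x0 + s *\<^sub>R v)) has_derivative (\<lambda>s. D (s *\<^sub>R v))) (at t)"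
    using D by (rule has_derivative_compose)
  moreover have "((\<lambda>s. mass_action G \<kappa> (x0 + s *\<^sub>R v)) has_derivative (\<lambda>s. (d * s) *\<^sub>R v)) (at t)"
    unfolding mass_action_on_line d_def
    by (intro has_derivative_scaleR_left poly_DERIV[unfolded has_field_derivative_def])
  ultimately have "D v = d *\<^sub>R v"
    using has_derivative_unique by (metis mult.right_neutral scaleR_one)
  then have "D ` span {v} = span {d *\<^sub>R v}"
    using real_vector.linear_span_image[OF has_derivative_linear[OF D], of "{v}"] by simp
  also have "\<dots> = span {v}"
    using real_vector.span_image_scale[of "{v}" "\<lambda>_. d"] assms by (simp add: d_def)
  finally show ?thesis
    unfolding nondegenerate_def stoich_subspace_eq using D by blast
qed

lemma steady_state_poly_perturb_rate:
  assumes "k < length G" "c k \<noteq> 0"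
  shows "steady_state_poly (\<kappa>(k := \<kappa> k + \<epsilon> / c k)) x0
    = steady_state_poly \<kappa> x0 + smult \<epsilon> (line_monomial x0 v (fst (G ! k)))"
proof -
  have "steady_state_poly (\<kappa>(k := \<kappa> k + \<epsilon> / c k)) x0 =
      (\<Sum>j<length G. smult (\<kappa> j * c j) (line_monomial x0 v (fst (G ! j)))
        + (if j = k then smult \<epsilon> (line_monomial x0 v (fst (G ! j))) else 0))"
    unfolding steady_state_poly_def using assms(2)
    by (intro sum.cong) (auto simp: distrib_right smult_add_left)
  also have "\<dots> = steady_state_poly \<kappa> x0 + smult \<epsilon> (line_monomial x0 v (fst (G ! k)))"
    unfolding steady_state_poly_def using assms(1) by (simp add: sum.distrib)
  finally show ?thesis .
qed

lemma exists_reaction_with_nonzero_coefficient: "\<exists>k<length G. c k \<noteq> 0"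
proof (rule ccontr)
  assume "\<not> ?thesis"
  then have "reaction_vec ` set G \<subseteq> {0}"
    unfolding image_subset_iff by (metis in_set_conv_nth reaction_vec_eq scale_zero_left singletonI)
  then have "span {v} \<subseteq> {0}"
    using span_mono[of "reaction_vec ` set G" "{0}"]
    unfolding stoich_subspace_eq[unfolded stoich_subspace_def] by simp
  then show False
    using v_nonzero span_base[of v "{v}"] by auto
qed

lemma exists_rates_with_nondegenerate_steady_states:
  assumes "pos_rates G \<kappa>" "finite (pos_steady_states G \<kappa> x0)"
  obtains \<kappa>' where "pos_rates G \<kappa>'"
    "ecard (pos_steady_states G \<kappa> x0) \<le> ecard (nondeg_pos_steady_states G \<kappa>' x0)"
proof -
  obtain k where k: "k < length G" "c k \<noteq> 0"
    using exists_reaction_with_nonzero_coefficient by blast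
  define I where "I = positive_line_params x0 v"
  define H where "H = steady_state_poly \<kappa> x0"
  define P where "P = line_monomial x0 v (fst (G ! k))"
  have pss_eq: "pos_steady_states G \<rho> x0 = (\<lambda>t. x0 + t *\<^sub>R v) `
      {t\<in>I. poly (steady_state_poly \<rho> x0) t = 0}" for \<rho>
    unfolding I_def by (rule pos_steady_states_eq)
  have fin: "finite {t\<in>I. poly H t = 0}"
    using assms(2) by (simp add: pss_eq H_def finite_image_iff inj_on_line)
  have "0 < \<kappa> k * \<bar>c k\<bar>"
    using assms(1) k by (simp add: pos_rates_def)
  moreover have "open I" "convex I" "\<And>t. t \<in> I \<Longrightarrow> poly P t > 0"
    unfolding I_def P_def
    by (simp_all add: open_positive_line_params convex_positive_line_params line_monomial_pos)
  ultimately obtain \<epsilon> where \<epsilon>: "\<bar>\<epsilon>\<bar> < \<kappa> k * \<bar>c k\<bar>"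
    "\<And>t. t \<in> I \<Longrightarrow> poly (H + smult \<epsilon> P) t = 0 \<Longrightarrow> poly (pderiv (H + smult \<epsilon> P)) t \<noteq> 0"
    "enat (card {t\<in>I. poly H t = 0}) \<le> ecard {t\<in>I. poly (H + smult \<epsilon> P) t = 0}"
    using small_perturbation_with_simple_roots[of I P H] fin by blast
  define \<kappa>' where "\<kappa>' = \<kappa>(k := \<kappa> k + \<epsilon> / c k)"
  have H': "steady_state_poly \<kappa>' x0 = H + smult \<epsilon> P"
    unfolding \<kappa>'_def H_def P_def by (rule steady_state_poly_perturb_rate[OF k])
  have "\<bar>\<epsilon> / c k\<bar> < \<kappa> k"
    using \<epsilon>(1) k(2) by (simp add: abs_divide divide_less_eq)
  then have "0 < \<kappa> k + \<epsilon> / c k"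
    using abs_ge_minus_self[of "\<epsilon> / c k"] by linarith
  then have "pos_rates G \<kappa>'"
    using assms(1) unfolding pos_rates_def \<kappa>'_def by auto
  moreover have "pos_steady_states G \<kappa>' x0 = nondeg_pos_steady_states G \<kappa>' x0"
    unfolding nondeg_pos_steady_states_def pss_eq H'
    using \<epsilon>(2) H' nondegenerate_if_simple_root by auto
  moreover have "ecard (pos_steady_states G \<kappa> x0) \<le> ecard (pos_steady_states G \<kappa>' x0)"
  proof -
    have "ecard (pos_steady_states G \<kappa> x0) = enat (card {t\<in>I. poly H t = 0})"
      unfolding pss_eq ecard_image[OF inj_on_line] using fin by (simp add: H_def ecard_def)
    also have "\<dots> \<le> ecard {t\<in>I. poly (H + smult \<epsilon> P) t = 0}"
      by (fact \<epsilon>(3))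
    also have "\<dots> = ecard (pos_steady_states G \<kappa>' x0)"
      by (simp add: pss_eq H' ecard_image inj_on_line)
    finally show ?thesis .
  qed
  ultimately show ?thesis
    using that by auto
qed

end

lemma subspace_dim_1_eq_span_singleton:
  fixes S :: "'a::euclidean_space set"
  assumes "subspace S" "dim S = 1"
  obtains v where "v \<noteq> 0" "S = span {v}"
proof -
  obtain B where B: "B \<subseteq> S" "independent B" "S \<subseteq> span B" "card B = dim S"
    using basis_exists by blast
  then have "card B = 1"
    using assms(2) by simp
  then obtain v where v: "B = {v}"
    by (rule card_1_singletonE)
  have "span B \<subseteq> S"
    using B(1) assms(1) by (rule span_minimal)
  then show ?thesis
    using that B(2,3) unfolding v by (auto simp: dependent_single)
qed

lemma one_dim_network_exists:
  assumes "dim (stoich_subspace G) = 1"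
  obtains v c where "one_dim_network G v c"
proof -
  obtain v where v: "v \<noteq> 0" "stoich_subspace G = span {v}"
    using subspace_dim_1_eq_span_singleton[OF _ assms] unfolding stoich_subspace_def by auto
  have "reaction_vec (G ! j) \<in> span {v}" if "j < length G" for j
    using that unfolding v(2)[symmetric] stoich_subspace_def by (auto intro: span_base)
  then have "\<forall>j. \<exists>a. j < length G \<longrightarrow> reaction_vec (G ! j) = a *\<^sub>R v"
    by (auto simp: span_singleton)
  then obtain c where "\<forall>j. j < length G \<longrightarrow> reaction_vec (G ! j) = c j *\<^sub>R v"
    by (rule choice[THEN exE])
  with v show ?thesis
    using that by (auto simp: one_dim_network_def)
qed

lemma cap_nondeg_le_cap_pos: "cap_nondeg G \<le> cap_pos G"
  unfolding cap_nondeg_def cap_pos_def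
  by (intro SUP_subset_mono order_refl ecard_mono) (auto simp: nondeg_pos_steady_states_def)

lemma SUP_enat_attained:
  fixes f :: "'a \<Rightarrow> enat"
  assumes "A \<noteq> {}" "(SUP x\<in>A. f x) < \<infinity>"
  obtains x where "x \<in> A" "f x = (SUP x\<in>A. f x)"
proof -
  have "finite (f ` A)"
    using assms by (auto simp: Sup_enat_def split: if_splits)
  then have "(SUP x\<in>A. f x) \<in> f ` A"
    using assms(1) by (simp add: Sup_enat_def)
  then show ?thesis
    using that by auto
qed

lemma cap_pos_attained:
  assumes "cap_pos G < \<infinity>"
  obtains \<kappa> x0 where "pos_rates G \<kappa>" "ecard (pos_steady_states G \<kappa> x0) = cap_pos G"
proof -
  have "(\<lambda>_. 1, 0) \<in> {(\<kappa>, x0). pos_rates G \<kappa>}"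
    by (simp add: pos_rates_def)
  then have nonempty: "{(\<kappa>, x0). pos_rates G \<kappa>} \<noteq> {}"
    by blast
  obtain p where p: "p \<in> {(\<kappa>, x0). pos_rates G \<kappa>}"
      "ecard (pos_steady_states G (fst p) (snd p)) = cap_pos G"
    using SUP_enat_attained[OF nonempty assms[unfolded cap_pos_def]]
    unfolding cap_pos_def by blast
  then show ?thesis
    using that by (cases p) auto
qed

theorem theorem6p1:
  fixes G :: "('s::finite) network"
  assumes "reaction_network G"
    and "dim (stoich_subspace G) = 1"
    and "cap_pos G < \<infinity>"
  shows "cap_nondeg G = cap_pos G"
proof -
  obtain v c where "one_dim_network G v c"
    using one_dim_network_exists assms(2) by blast
  then interpret one_dim_network G v c .
  obtain \<kappa> x0 where \<kappa>: "pos_rates G \<kappa>" "ecard (pos_steady_states G \<kappa> x0) = cap_pos G"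
    using cap_pos_attained[OF assms(3)] .
  then have "finite (pos_steady_states G \<kappa> x0)"
    using assms(3) by (auto simp: ecard_def split: if_splits)
  then obtain \<kappa>' where "pos_rates G \<kappa>'"
      "ecard (pos_steady_states G \<kappa> x0) \<le> ecard (nondeg_pos_steady_states G \<kappa>' x0)"
    using exists_rates_with_nondegenerate_steady_states[OF \<kappa>(1)] by blast
  then have "cap_pos G \<le> cap_nondeg G"
    unfolding cap_nondeg_def \<kappa>(2)[symmetric] by (auto intro: SUP_upper2[of "(\<kappa>', x0)"])
  then show ?thesis
    by (rule antisym[OF cap_nondeg_le_cap_pos])
qed

end
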